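(* Let $\mathcal{Q}$ be a quadrangle with vertices $A,C,B,D$ in cyclic order. For each point $X$ on the line $A\vee B$ put $Y=X\cdot\rho_{A,B}$ and $Z(X)=(C\vee X)\wedge(D\vee Y)$. Then $C\vee X\neq D\vee Y$ for every $X\in A\vee B$, and the map $X\mapsto Z(X)$ is a bijection from the line $A\vee B$ onto the harmonic curve $\mathcal{C}_{\mathcal{Q}}$.
   Context: $\mathbb{P}^2$ denotes the projective plane over a field $F$ with $\operatorname{char}F\neq 2$. For distinct points $X,Y$, $X\vee Y$ is the line through them; for distinct lines $\ell,m$, $\ell\wedge m$ is their common point. Maps act on the right: $X\cdot\rho$. Four distinct collinear points $A,C,B,D$ form a harmonic set with conjugate pairs $\{A,B\}$ and $\{C,D\}$ if the cross-ratio $(A,B;C,D)=-1$; $D$ is then the harmonic conjugate of $C$ with respect to $A,B$. Four distinct concurrent lines form a harmonic pencil with given conjugate pairs if some (equivalently every) line not through their common point meets them in a harmonic set with the corresponding conjugate pairs. For distinct points $A,B$ on a line $\ell$, the harmonic reflection $\rho_{A,B}:\ell\to\ell$ fixes $A$ and $B$ and sends every other point of $\ell$ to its harmonic conjugate with respect to $A,B$. A quadrangle $\mathcal{Q}$ with vertices $A,C,B,D$ (in cyclic order) consists of four points in general position (no three collinear) together with this cyclic order up to reversal; its sides are $A\vee C, C\vee B, B\vee D, D\vee A$, its opposite vertex pairs are $\{A,B\}$ and $\{C,D\}$, and its diagonal lines are $A\vee B$ and $C\vee D$. The harmonic curve $\mathcal{C}_{\mathcal{Q}}$ is the set consisting of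 $A,C,B,D$ together with all points $Z\notin\{A,B,C,D\}$ such that $Z\vee A, Z\vee C, Z\vee B, Z\vee D$ are four distinct lines forming a harmonic pencil with conjugate pairs $\{Z\vee A,Z\vee B\}$ and $\{Z\vee C,Z\vee D\}$. *)

theory Defs
  imports Main
begin

type_synonym 'a vec3 = "'a \<times> 'a \<times> 'a"

definition vsmult :: "'a::field \<Rightarrow> 'a vec3 \<Rightarrow> 'a vec3" where
  "vsmult c v = (case v of (x, y, z) \<Rightarrow> (c * x, c * y, c * z))"

definition vadd :: "'a::field vec3 \<Rightarrow> 'a vec3 \<Rightarrow> 'a vec3" where
  "vadd v w = (case v of (x, y, z) \<Rightarrow> case w of (x', y', z') \<Rightarrow> (x + x', y + y', z + z'))"

definition vdot :: "'a::field vec3 \<Rightarrow> 'a vec3 \<Rightarrow> 'a" where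
  "vdot v w = (case v of (x, y, z) \<Rightarrow> case w of (x', y', z') \<Rightarrow> x * x' + y * y' + z * z')"

typedef (overloaded) 'a point = "{S :: ('a::field) vec3 set. \<exists>v. v \<noteq> (0, 0, 0) \<and> S = {vsmult c v | c. c \<noteq> 0}}"
  by (rule exI[of _ "{vsmult c (1, 0, 0) | c. c \<noteq> 0}"], rule CollectI, rule exI[of _ "(1,0,0)"]) simp

definition rep :: "'a::field point \<Rightarrow> 'a vec3" where
  "rep P = (SOME v. v \<in> Rep_point P)"

definition line_of :: "'a::field vec3 \<Rightarrow> 'a point set" where
  "line_of w = {P. vdot (rep P) w = 0}"

definition is_line :: "'a::field point set \<Rightarrow> bool" where
  "is_line L \<longleftrightarrow> (\<exists>w. w \<noteq> (0, 0, 0) \<and> L = line_of w)"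

definition join :: "'a::field point \<Rightarrow> 'a point \<Rightarrow> 'a point set" where
  "join X Y = (THE L. is_line L \<and> X \<in> L \<and> Y \<in> L)"

definition meet :: "'a::field point set \<Rightarrow> 'a point set \<Rightarrow> 'a point" where
  "meet l m = (THE P. P \<in> l \<and> P \<in> m)"

definition collinear :: "'a::field point set \<Rightarrow> bool" where
  "collinear S \<longleftrightarrow> (\<exists>L. is_line L \<and> S \<subseteq> L)"

definition coords :: "'a::field point \<Rightarrow> 'a point \<Rightarrow> 'a point \<Rightarrow> 'a \<times> 'a" where
  "coords P A B = (THE p. rep P = vadd (vsmult (fst p) (rep A)) (vsmult (snd p) (rep B)))"

definition cross_ratio :: "'a::field point \<Rightarrow> 'a point \<Rightarrow> 'a point \<Rightarrow> 'a point \<Rightarrow> 'a" where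
  "cross_ratio A B C D =
     (let (a, b) = coords C A B; (c, d) = coords D A B in (b / a) / (d / c))"

definition harmonic_set :: "'a::field point \<Rightarrow> 'a point \<Rightarrow> 'a point \<Rightarrow> 'a point \<Rightarrow> bool" where
  "harmonic_set A B C D \<longleftrightarrow> distinct [A, B, C, D] \<and> collinear {A, B, C, D}
     \<and> cross_ratio A B C D = -1"

definition harmonic_pencil ::
  "'a::field point set \<Rightarrow> 'a point set \<Rightarrow> 'a point set \<Rightarrow> 'a point set \<Rightarrow> bool" where
  "harmonic_pencil l1 l2 l3 l4 \<longleftrightarrow>
     is_line l1 \<and> is_line l2 \<and> is_line l3 \<and> is_line l4 \<and> distinct [l1, l2, l3, l4] \<and>
     (\<exists>P0. P0 \<in> l1 \<and> P0 \<in> l2 \<and> P0 \<in> l3 \<and> P0 \<in> l4 \<and>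
        (\<exists>m. is_line m \<and> P0 \<notin> m \<and>
           harmonic_set (meet m l1) (meet m l2) (meet m l3) (meet m l4)))"

definition hrefl :: "'a::field point \<Rightarrow> 'a point \<Rightarrow> 'a point \<Rightarrow> 'a point" where
  "hrefl A B X = (if X = A \<or> X = B then X else (THE Y. harmonic_set A B X Y))"

definition quadrangle :: "'a::field point \<Rightarrow> 'a point \<Rightarrow> 'a point \<Rightarrow> 'a point \<Rightarrow> bool" where
  "quadrangle A C B D \<longleftrightarrow> distinct [A, C, B, D] \<and>
     \<not> collinear {A, C, B} \<and> \<not> collinear {A, C, D} \<and>
     \<not> collinear {A, B, D} \<and> \<not> collinear {C, B, D}"

definition harmonic_curve :: "'a::field point \<Rightarrow> 'a point \<Rightarrow> 'a point \<Rightarrow> 'a point \<Rightarrow> 'a point set" where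
  "harmonic_curve A C B D = {A, C, B, D} \<union>
     {Z. Z \<notin> {A, B, C, D} \<and>
         harmonic_pencil (join Z A) (join Z B) (join Z C) (join Z D)}"

end

theory Submission
  imports Defs
begin

text \<open>Since no three vertices are collinear, there are homogeneous coordinates in which
  \<open>A = (1:0:0)\<close>, \<open>B = (0:1:0)\<close>, \<open>C = (0:0:1)\<close> and \<open>D = (1:1:1)\<close>. Writing \<open>[p q r]\<close> for the
  determinant, the pencil \<open>ZA, ZB, ZC, ZD\<close> is harmonic iff \<open>[ZAC][ZBD] + [ZAD][ZBC] = 0\<close>, i.e.
  off the vertices the harmonic curve is the conic \<open>uw + vw = 2uv\<close> through \<open>A, B, C, D\<close>.
  The harmonic reflection sends \<open>X = (s:t:0)\<close> to \<open>Y = (s:-t:0)\<close>, and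
  \<open>(C \<or> X) \<and> (D \<or> Y) = (s(s+t) : t(s+t) : 2st)\<close> is the rational parametrization of this
  conic by the line \<open>A \<or> B\<close>, which is bijective when \<open>2 \<noteq> 0\<close>.\<close>

section \<open>Vector algebra in \<open>F\<^sup>3\<close>\<close>

definition cross :: "'a::field vec3 \<Rightarrow> 'a vec3 \<Rightarrow> 'a vec3" where
  "cross u v = (case u of (u1, u2, u3) \<Rightarrow> case v of (v1, v2, v3) \<Rightarrow>
     (u2 * v3 - u3 * v2, u3 * v1 - u1 * v3, u1 * v2 - u2 * v1))"

definition det3 :: "'a::field vec3 \<Rightarrow> 'a vec3 \<Rightarrow> 'a vec3 \<Rightarrow> 'a" where
  "det3 u v w = vdot u (cross v w)"

lemma vsmult_Pair [simp]: "vsmult c (u1, u2, u3) = (c * u1, c * u2, c * u3)"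
  by (simp add: vsmult_def)

lemma vadd_Pair [simp]: "vadd (u1, u2, u3) (v1, v2, v3) = (u1 + v1, u2 + v2, u3 + v3)"
  by (simp add: vadd_def)

lemma vdot_Pair [simp]: "vdot (u1, u2, u3) (v1, v2, v3) = u1 * v1 + u2 * v2 + u3 * v3"
  by (simp add: vdot_def)

lemma cross_Pair [simp]:
  "cross (u1, u2, u3) (v1, v2, v3) = (u2 * v3 - u3 * v2, u3 * v1 - u1 * v3, u1 * v2 - u2 * v1)"
  by (simp add: cross_def)

lemma det3_Pair [simp]:
  "det3 (u1, u2, u3) (v1, v2, v3) (w1, w2, w3) =
     u1 * (v2 * w3 - v3 * w2) + u2 * (v3 * w1 - v1 * w3) + u3 * (v1 * w2 - v2 * w1)"
  by (simp add: det3_def algebra_simps)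

lemma vsmult_zero [simp]: "vsmult 0 v = (0, 0, 0)"
  by (cases v) simp

lemma vadd_zero_left [simp]: "vadd (0, 0, 0) v = v"
  by (cases v) simp

lemma vadd_zero_right [simp]: "vadd v (0, 0, 0) = v"
  by (cases v) simp

lemma vsmult_one [simp]: "vsmult 1 v = v"
  by (cases v) simp

lemma vsmult_vsmult: "vsmult c (vsmult k v) = vsmult (c * k) v"
  by (cases v) (simp add: algebra_simps)

lemma vsmult_eq_zero_iff: "vsmult k v = (0, 0, 0) \<longleftrightarrow> k = 0 \<or> v = (0, 0, 0)"
  by (cases v) auto

lemma vsmult_vadd: "vsmult c (vadd x y) = vadd (vsmult c x) (vsmult c y)"
  by (cases x; cases y) (simp add: algebra_simps)

lemma vdot_commute: "vdot u v = vdot v u"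
  by (cases u; cases v) (simp add: algebra_simps)

lemma vdot_vsmult_left: "vdot (vsmult k u) v = k * vdot u v"
  by (cases u; cases v) (simp add: algebra_simps)

lemma vdot_vsmult_right: "vdot u (vsmult k v) = k * vdot u v"
  by (cases u; cases v) (simp add: algebra_simps)

lemma vdot_cross_left [simp]: "vdot u (cross u v) = 0"
  by (cases u; cases v) (simp add: algebra_simps)

lemma vdot_cross_right [simp]: "vdot v (cross u v) = 0"
  by (cases u; cases v) (simp add: algebra_simps)

lemma det3_rotate: "det3 u v w = det3 v w u"
  by (cases u; cases v; cases w) (simp add: algebra_simps)

lemma det3_swap: "det3 u w v = - det3 u v w"
  by (cases u; cases v; cases w) (simp add: algebra_simps)

lemma det3_same [simp]: "det3 u v v = 0"
  by (cases u; cases v) (simp add: algebra_simps)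

lemma det3_vsmult: "det3 (vsmult k u) (vsmult l v) (vsmult m w) = k * l * m * det3 u v w"
  by (cases u; cases v; cases w) (simp add: algebra_simps)

lemma cross_cross: "cross u (cross v w) = vadd (vsmult (vdot u w) v) (vsmult (- vdot u v) w)"
  by (cases u; cases v; cases w) (simp add: algebra_simps)

lemma cross_cross_cross:
  "cross (cross p q) (cross r s) = vadd (vsmult (det3 p q s) r) (vsmult (- det3 p q r) s)"
  by (cases p; cases q; cases r; cases s) (simp add: algebra_simps)

lemma cramer_rule:
  "vsmult (det3 a b c) v =
     vadd (vadd (vsmult (det3 v b c) a) (vsmult (det3 a v c) b)) (vsmult (det3 a b v) c)"
  by (cases a; cases b; cases c; cases v) (simp add: algebra_simps)

lemma det3_eq_zero_if_orthogonal:
  assumes "n \<noteq> (0, 0, 0)" "vdot u n = 0" "vdot v n = 0" "vdot w n = 0"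
  shows "det3 u v w = 0"
proof -
  have "vsmult (det3 u v w) n =
    vadd (vadd (vsmult (vdot u n) (cross v w)) (vsmult (vdot v n) (cross w u))) (vsmult (vdot w n) (cross u v))"
    by (cases u; cases v; cases w; cases n) (simp add: algebra_simps)
  with assms show ?thesis by (simp add: vsmult_eq_zero_iff)
qed

lemma cross_eq_zero_imp_parallel:
  assumes "cross u w = (0, 0, 0)" "u \<noteq> (0, 0, 0)"
  shows "\<exists>k. w = vsmult k u"
proof -
  obtain u1 u2 u3 w1 w2 w3 where uw: "u = (u1, u2, u3)" "w = (w1, w2, w3)"
    by (cases u; cases w) auto
  have e: "u2 * w3 = u3 * w2" "u3 * w1 = u1 * w3" "u1 * w2 = u2 * w1"
    using assms(1) by (auto simp: uw)
  consider "u1 \<noteq> 0" | "u2 \<noteq> 0" | "u3 \<noteq> 0" using assms(2) uw by auto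
  then show ?thesis
  proof cases
    case 1 with e show ?thesis by (intro exI[of _ "w1 / u1"]) (simp add: uw field_simps)
  next
    case 2 with e show ?thesis by (intro exI[of _ "w2 / u2"]) (simp add: uw field_simps)
  next
    case 3 with e show ?thesis by (intro exI[of _ "w3 / u3"]) (simp add: uw field_simps)
  qed
qed

lemma orthogonal_to_both_imp_parallel_cross:
  assumes "vdot p u = 0" "vdot p w = 0" "cross u w \<noteq> (0, 0, 0)"
  shows "\<exists>k. p = vsmult k (cross u w)"
proof -
  have "cross p (cross u w) = (0, 0, 0)"
    using assms by (simp add: cross_cross vdot_commute)
  then have "cross (cross u w) p = (0, 0, 0)"
    by (cases p; cases u; cases w) (simp add: algebra_simps)
  then show ?thesis using cross_eq_zero_imp_parallel assms(3) by blast
qed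

lemma exists_vdot_nonzero:
  assumes "z \<noteq> (0, 0, 0)"
  shows "\<exists>n. n \<noteq> (0, 0, 0) \<and> vdot n z \<noteq> 0"
proof -
  obtain z1 z2 z3 where z: "z = (z1, z2, z3)" by (cases z) auto
  consider "z1 \<noteq> 0" | "z2 \<noteq> 0" | "z3 \<noteq> 0" using assms z by auto
  then show ?thesis
  proof cases
    case 1 then show ?thesis by (intro exI[of _ "(1, 0, 0)"]) (simp add: z)
  next
    case 2 then show ?thesis by (intro exI[of _ "(0, 1, 0)"]) (simp add: z)
  next
    case 3 then show ?thesis by (intro exI[of _ "(0, 0, 1)"]) (simp add: z)
  qed
qed

lemma cross_nonzero_imp_nonzero:
  assumes "cross v w \<noteq> (0, 0, 0)"
  shows "v \<noteq> (0, 0, 0)" "w \<noteq> (0, 0, 0)"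
  using assms by (cases v; cases w; auto)+

lemma cross_vsmult_right: "cross v (vsmult k v) = (0, 0, 0)"
  by (cases v) (simp add: algebra_simps)

lemma det3_nonzero_imp_nonzero:
  assumes "det3 u v w \<noteq> 0"
  shows "u \<noteq> (0, 0, 0)" "v \<noteq> (0, 0, 0)" "w \<noteq> (0, 0, 0)" "cross v w \<noteq> (0, 0, 0)"
  using assms by (cases u; cases v; cases w; auto)+

section \<open>Points and lines in homogeneous coordinates\<close>

text \<open>\<open>pt (0, 0, 0)\<close> is an unspecified point.\<close>

definition pt :: "'a::field vec3 \<Rightarrow> 'a point" where
  "pt v = Abs_point {vsmult c v | c. c \<noteq> 0}"

lemma smult_class_vsmult:
  assumes "k \<noteq> 0"
  shows "{vsmult c (vsmult k v) | c. c \<noteq> 0} = {vsmult c v | c. c \<noteq> (0::'a::field)}"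
proof (intro set_eqI iffI)
  fix x assume "x \<in> {vsmult c v | c. c \<noteq> 0}"
  then obtain c where "c \<noteq> 0" "x = vsmult c v" by auto
  with assms have "x = vsmult (c / k) (vsmult k v)" "c / k \<noteq> 0" by (auto simp: vsmult_vsmult)
  then show "x \<in> {vsmult c (vsmult k v) | c. c \<noteq> 0}" by blast
qed (use assms in \<open>auto simp: vsmult_vsmult\<close>)

lemma rep_in_Rep_point: "rep P \<in> Rep_point P"
proof -
  obtain v where "Rep_point P = {vsmult c v | c. c \<noteq> 0}"
    using Rep_point[of P] by blast
  then have "v \<in> Rep_point P" by (auto intro!: exI[of _ 1])
  then show ?thesis unfolding rep_def by (rule someI)
qed

lemma rep_eq_vsmult:
  obtains v k where "v \<noteq> (0, 0, 0)" "k \<noteq> 0" "Rep_point P = {vsmult c v | c. c \<noteq> 0}"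
    "rep P = vsmult k v"
proof -
  obtain v where v: "v \<noteq> (0, 0, 0)" "Rep_point P = {vsmult c v | c. c \<noteq> 0}"
    using Rep_point[of P] by blast
  then have "rep P \<in> {vsmult c v | c. c \<noteq> 0}" using rep_in_Rep_point[of P] by simp
  then obtain k where "k \<noteq> 0" "rep P = vsmult k v" by blast
  with v show ?thesis using that by blast
qed

lemma rep_nonzero: "rep P \<noteq> (0, 0, 0)"
proof (rule rep_eq_vsmult[of P])
  fix v k assume "v \<noteq> (0, 0, 0)" "k \<noteq> 0" "rep P = vsmult k v"
  then show "rep P \<noteq> (0, 0, 0)" by (simp add: vsmult_eq_zero_iff)
qed

lemma pt_rep [simp]: "pt (rep P) = P"
proof (rule rep_eq_vsmult[of P])
  fix v k assume k: "k \<noteq> 0" and P: "Rep_point P = {vsmult c v | c. c \<noteq> 0}"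
    and rep: "rep P = vsmult k v"
  have "pt (rep P) = Abs_point (Rep_point P)"
    unfolding pt_def rep P smult_class_vsmult[OF k] ..
  then show "pt (rep P) = P" by (simp add: Rep_point_inverse)
qed

lemma rep_pt:
  assumes "v \<noteq> (0, 0, 0)"
  obtains k where "k \<noteq> 0" "rep (pt v) = vsmult k v"
proof -
  have "Rep_point (pt v) = {vsmult c v | c. c \<noteq> 0}"
    unfolding pt_def using assms by (intro Abs_point_inverse) blast
  with rep_in_Rep_point[of "pt v"] that show ?thesis by blast
qed

lemma pt_vsmult [simp]: "k \<noteq> 0 \<Longrightarrow> pt (vsmult k v) = pt v"
  unfolding pt_def by (simp add: smult_class_vsmult)

lemma pt_eq_pt_iff:
  assumes "v \<noteq> (0, 0, 0)" "w \<noteq> (0, 0, 0)"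
  shows "pt v = pt w \<longleftrightarrow> (\<exists>k. w = vsmult k v)"
proof
  assume eq: "pt v = pt w"
  obtain k where k: "k \<noteq> 0" "rep (pt v) = vsmult k v" using rep_pt assms(1) by blast
  obtain l where l: "l \<noteq> 0" "rep (pt w) = vsmult l w" using rep_pt assms(2) by blast
  from eq k l have "vsmult (1 / l) (vsmult l w) = vsmult (1 / l) (vsmult k v)" by simp
  with l have "w = vsmult (k / l) v" by (simp add: vsmult_vsmult)
  then show "\<exists>k. w = vsmult k v" ..
next
  assume "\<exists>k. w = vsmult k v"
  then obtain k where w: "w = vsmult k v" ..
  with assms(2) have "k \<noteq> 0" by auto
  with w show "pt v = pt w" by simp
qed

lemma cross_nonzero_iff_pt_neq:
  assumes "v \<noteq> (0, 0, 0)" "w \<noteq> (0, 0, 0)"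
  shows "cross v w \<noteq> (0, 0, 0) \<longleftrightarrow> pt v \<noteq> pt w"
proof
  assume cross: "cross v w \<noteq> (0, 0, 0)"
  show "pt v \<noteq> pt w"
  proof
    assume "pt v = pt w"
    then obtain k where "w = vsmult k v" using pt_eq_pt_iff assms by blast
    with cross show False by (simp add: cross_vsmult_right)
  qed
next
  assume neq: "pt v \<noteq> pt w"
  show "cross v w \<noteq> (0, 0, 0)"
  proof
    assume "cross v w = (0, 0, 0)"
    then obtain k where "w = vsmult k v" using cross_eq_zero_imp_parallel assms(1) by blast
    with neq show False using pt_eq_pt_iff[OF assms] by blast
  qed
qed

lemma det3_nonzero_imp_pt_neq:
  assumes "det3 u v w \<noteq> 0"
  shows "pt v \<noteq> pt w"
  using cross_nonzero_iff_pt_neq[of v w] det3_nonzero_imp_nonzero[OF assms] by simp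

lemma mem_line_of_pt:
  assumes "v \<noteq> (0, 0, 0)"
  shows "pt v \<in> line_of n \<longleftrightarrow> vdot v n = 0"
proof -
  obtain k where "k \<noteq> 0" "rep (pt v) = vsmult k v" using rep_pt assms by blast
  then show ?thesis by (simp add: line_of_def vdot_vsmult_left)
qed

lemma is_line_line_of: "n \<noteq> (0, 0, 0) \<Longrightarrow> is_line (line_of n)"
  unfolding is_line_def by blast

lemma line_of_vsmult: "k \<noteq> 0 \<Longrightarrow> line_of (vsmult k n) = line_of n"
  unfolding line_of_def by (simp add: vdot_vsmult_right)

lemma line_through_pt_pt:
  assumes "cross v w \<noteq> (0, 0, 0)" "is_line L" "pt v \<in> L" "pt w \<in> L"
  shows "L = line_of (cross v w)"
proof -
  obtain n where n: "n \<noteq> (0, 0, 0)" "L = line_of n" using assms(2) unfolding is_line_def by blast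
  have "vdot n v = 0" "vdot n w = 0"
    using assms(3,4) n cross_nonzero_imp_nonzero[OF assms(1)]
    by (simp_all add: mem_line_of_pt vdot_commute[of n])
  then obtain k where k: "n = vsmult k (cross v w)"
    using orthogonal_to_both_imp_parallel_cross assms(1) by blast
  with n(1) have "k \<noteq> 0" by auto
  with k n(2) show ?thesis by (simp add: line_of_vsmult)
qed

lemma join_pt:
  assumes "cross v w \<noteq> (0, 0, 0)"
  shows "join (pt v) (pt w) = line_of (cross v w)"
  unfolding join_def
proof (rule the_equality)
  show "is_line (line_of (cross v w)) \<and> pt v \<in> line_of (cross v w) \<and> pt w \<in> line_of (cross v w)"
    using assms cross_nonzero_imp_nonzero[OF assms] by (simp add: is_line_line_of mem_line_of_pt)
qed (use line_through_pt_pt assms in blast)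

lemma common_point_line_of:
  assumes "cross u w \<noteq> (0, 0, 0)" "P \<in> line_of u" "P \<in> line_of w"
  shows "P = pt (cross u w)"
proof -
  have "vdot (rep P) u = 0" "vdot (rep P) w = 0" using assms(2,3) by (auto simp: line_of_def)
  then obtain k where k: "rep P = vsmult k (cross u w)"
    using orthogonal_to_both_imp_parallel_cross assms(1) by blast
  with rep_nonzero[of P] have "k \<noteq> 0" by auto
  with k show ?thesis by (metis pt_rep pt_vsmult)
qed

lemma meet_line_of:
  assumes "cross u w \<noteq> (0, 0, 0)"
  shows "meet (line_of u) (line_of w) = pt (cross u w)"
  unfolding meet_def
proof (rule the_equality)
  show "pt (cross u w) \<in> line_of u \<and> pt (cross u w) \<in> line_of w"
    using assms by (simp add: mem_line_of_pt vdot_commute[of "cross u w"])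
qed (use common_point_line_of assms in blast)

lemma collinear_pt_iff:
  assumes "u \<noteq> (0, 0, 0)" "v \<noteq> (0, 0, 0)" "w \<noteq> (0, 0, 0)" "pt v \<noteq> pt w"
  shows "collinear {pt u, pt v, pt w} \<longleftrightarrow> det3 u v w = 0"
proof
  assume "collinear {pt u, pt v, pt w}"
  then obtain n where "n \<noteq> (0, 0, 0)" "pt u \<in> line_of n" "pt v \<in> line_of n" "pt w \<in> line_of n"
    unfolding collinear_def is_line_def by auto
  with assms show "det3 u v w = 0" by (simp add: mem_line_of_pt det3_eq_zero_if_orthogonal)
next
  assume "det3 u v w = 0"
  moreover have "cross v w \<noteq> (0, 0, 0)" using assms cross_nonzero_iff_pt_neq by blast
  ultimately show "collinear {pt u, pt v, pt w}"
    unfolding collinear_def using assms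
    by (intro exI[of _ "line_of (cross v w)"]) (simp add: is_line_line_of mem_line_of_pt det3_def)
qed

section \<open>Cross ratios and harmonic pencils\<close>

lemma det3_vadd_vsmult:
  "det3 e (vadd (vsmult x p) (vsmult y q)) q = x * det3 e p q"
  "det3 e p (vadd (vsmult x p) (vsmult y q)) = y * det3 e p q"
  by (cases e; cases p; cases q; simp add: algebra_simps)+

lemma coplanar_eq_combination:
  assumes "det3 e p q \<noteq> 0" "det3 v p q = 0"
  shows "v = vadd (vsmult (det3 e v q / det3 e p q) p) (vsmult (det3 e p v / det3 e p q) q)"
proof -
  let ?D = "det3 e p q"
  have "vsmult ?D v = vadd (vsmult (det3 e v q) p) (vsmult (det3 e p v) q)"
    using cramer_rule[of e p q v] assms(2) by simp
  then have "vsmult (1 / ?D) (vsmult ?D v) =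
      vsmult (1 / ?D) (vadd (vsmult (det3 e v q) p) (vsmult (det3 e p v) q))"
    by simp
  with assms(1) show ?thesis by (simp add: vsmult_vsmult vsmult_vadd)
qed

lemma coords_eq:
  assumes "det3 e (rep A) (rep B) \<noteq> 0" "det3 (rep P) (rep A) (rep B) = 0"
  shows "coords P A B = (det3 e (rep P) (rep B) / det3 e (rep A) (rep B),
                         det3 e (rep A) (rep P) / det3 e (rep A) (rep B))"
  unfolding coords_def
proof (rule the_equality)
  fix p assume "rep P = vadd (vsmult (fst p) (rep A)) (vsmult (snd p) (rep B))"
  then have "det3 e (rep P) (rep B) = fst p * det3 e (rep A) (rep B)"
    "det3 e (rep A) (rep P) = snd p * det3 e (rep A) (rep B)"
    by (simp_all add: det3_vadd_vsmult)
  with assms(1) show "p = (det3 e (rep P) (rep B) / det3 e (rep A) (rep B),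
                           det3 e (rep A) (rep P) / det3 e (rep A) (rep B))"
    by (cases p) simp
qed (use coplanar_eq_combination[OF assms] in simp)

lemma cross_ratio_rep:
  assumes "det3 e (rep A) (rep B) \<noteq> 0"
    "det3 (rep C) (rep A) (rep B) = 0" "det3 (rep D) (rep A) (rep B) = 0"
  shows "cross_ratio A B C D =
    det3 e (rep A) (rep C) * det3 e (rep B) (rep D) / (det3 e (rep A) (rep D) * det3 e (rep B) (rep C))"
  using assms(1) det3_swap[of e "rep B" "rep C"] det3_swap[of e "rep B" "rep D"]
  by (simp add: cross_ratio_def coords_eq[OF assms(1,2)] coords_eq[OF assms(1,3)])

lemma cross_ratio_pt:
  assumes "det3 e a b \<noteq> 0" "det3 c a b = 0" "det3 d a b = 0" "c \<noteq> (0, 0, 0)" "d \<noteq> (0, 0, 0)"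
  shows "cross_ratio (pt a) (pt b) (pt c) (pt d) =
    det3 e a c * det3 e b d / (det3 e a d * det3 e b c)"
proof -
  obtain ka kb kc kd where k: "ka \<noteq> 0" "kb \<noteq> 0" "kc \<noteq> 0" "kd \<noteq> 0"
    "rep (pt a) = vsmult ka a" "rep (pt b) = vsmult kb b"
    "rep (pt c) = vsmult kc c" "rep (pt d) = vsmult kd d"
    using rep_pt det3_nonzero_imp_nonzero[OF assms(1)] assms(4,5) by metis
  have det3_scaled: "det3 e (vsmult k x) (vsmult l y) = k * l * det3 e x y" for k l x y
    using det3_vsmult[of 1 e k x l y] by simp
  have "cross_ratio (pt a) (pt b) (pt c) (pt d) =
      (ka * kc * det3 e a c) * (kb * kd * det3 e b d) / ((ka * kd * det3 e a d) * (kb * kc * det3 e b c))"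
    using assms k by (subst cross_ratio_rep[of e]) (simp_all add: det3_scaled det3_vsmult)
  also have "\<dots> = det3 e a c * det3 e b d / (det3 e a d * det3 e b c)"
    using k by simp
  finally show ?thesis .
qed

lemma line_of_cross_eq_iff:
  assumes "cross z x \<noteq> (0, 0, 0)" "cross z y \<noteq> (0, 0, 0)"
  shows "line_of (cross z x) = line_of (cross z y) \<longleftrightarrow> det3 z x y = 0"
proof -
  have nonzero: "z \<noteq> (0, 0, 0)" "y \<noteq> (0, 0, 0)" using cross_nonzero_imp_nonzero[OF assms(2)] by auto
  have "pt y \<in> line_of (cross z x) \<longleftrightarrow> det3 z x y = 0"
    using nonzero det3_rotate[of y z x] by (simp add: mem_line_of_pt det3_def)
  moreover have "pt y \<in> line_of (cross z y)" "pt z \<in> line_of (cross z x)"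
    using nonzero by (simp_all add: mem_line_of_pt)
  ultimately show ?thesis
    using line_through_pt_pt[OF assms(2)] is_line_line_of[OF assms(1)] by blast
qed

text \<open>\<open>cross n (cross z x)\<close> represents the point where the line \<open>z \<or> x\<close> meets the line
  \<open>line_of n\<close>; cutting a pencil through \<open>z\<close> by \<open>line_of n\<close> scales all determinants
  \<open>det3 z x y\<close> by the same factor.\<close>

lemma cross_section: "cross z (cross n (cross z x)) = vsmult (- vdot n z) (cross z x)"
  by (cases z; cases n; cases x) (simp add: algebra_simps)

lemma det3_section: "det3 z (cross n (cross z x)) (cross n (cross z y)) = (vdot n z)\<^sup>2 * det3 z x y"
  by (cases z; cases n; cases x; cases y) (simp add: algebra_simps power2_eq_square)

lemma section_nonzero:
  assumes "vdot n z \<noteq> 0" "cross z x \<noteq> (0, 0, 0)"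
  shows "cross n (cross z x) \<noteq> (0, 0, 0)"
proof
  assume "cross n (cross z x) = (0, 0, 0)"
  then have "cross z (cross n (cross z x)) = (0, 0, 0)" by (cases z) simp
  with assms show False by (simp add: cross_section vsmult_eq_zero_iff)
qed

lemma cross_ratio_section:
  assumes "vdot n z \<noteq> 0" "det3 z x1 x2 \<noteq> 0" "cross z x3 \<noteq> (0, 0, 0)" "cross z x4 \<noteq> (0, 0, 0)"
  shows "cross_ratio (pt (cross n (cross z x1))) (pt (cross n (cross z x2)))
      (pt (cross n (cross z x3))) (pt (cross n (cross z x4))) =
    det3 z x1 x3 * det3 z x2 x4 / (det3 z x1 x4 * det3 z x2 x3)"
proof -
  have n: "n \<noteq> (0, 0, 0)" using assms(1) by (cases z) auto
  have "det3 (cross n (cross z x)) (cross n (cross z x1)) (cross n (cross z x2)) = 0" for x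
    using det3_eq_zero_if_orthogonal[OF n] by (simp add: vdot_commute[of _ n])
  then show ?thesis
    using assms section_nonzero[OF assms(1)] by (subst cross_ratio_pt[of z]) (simp_all add: det3_section)
qed

text \<open>By \<open>cross_ratio_section\<close>, the cross ratio of the pencil \<open>z \<or> x\<^sub>i\<close> is
  \<open>det3 z x1 x3 * det3 z x2 x4 / (det3 z x1 x4 * det3 z x2 x3)\<close>.\<close>

definition harmonic_pencil_det :: "'a::field vec3 \<Rightarrow> 'a vec3 \<Rightarrow> 'a vec3 \<Rightarrow> 'a vec3 \<Rightarrow> 'a vec3 \<Rightarrow> bool"
  where "harmonic_pencil_det z x1 x2 x3 x4 \<longleftrightarrow>
    det3 z x1 x2 \<noteq> 0 \<and> det3 z x1 x3 \<noteq> 0 \<and> det3 z x1 x4 \<noteq> 0 \<and>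
    det3 z x2 x3 \<noteq> 0 \<and> det3 z x2 x4 \<noteq> 0 \<and> det3 z x3 x4 \<noteq> 0 \<and>
    det3 z x1 x3 * det3 z x2 x4 + det3 z x1 x4 * det3 z x2 x3 = 0"

lemma meet_section:
  assumes "vdot n z \<noteq> 0" "cross z x \<noteq> (0, 0, 0)"
  shows "meet (line_of n) (line_of (cross z x)) = pt (cross n (cross z x))"
  using meet_line_of section_nonzero[OF assms] by blast

lemma harmonic_pencil_imp_det:
  assumes nonzero: "cross z x1 \<noteq> (0, 0, 0)" "cross z x2 \<noteq> (0, 0, 0)"
      "cross z x3 \<noteq> (0, 0, 0)" "cross z x4 \<noteq> (0, 0, 0)"
    and H: "harmonic_pencil (line_of (cross z x1)) (line_of (cross z x2))
      (line_of (cross z x3)) (line_of (cross z x4))"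
  shows "harmonic_pencil_det z x1 x2 x3 x4"
proof -
  have "distinct [line_of (cross z x1), line_of (cross z x2), line_of (cross z x3), line_of (cross z x4)]"
    using H unfolding harmonic_pencil_def by blast
  then have dets: "det3 z x1 x2 \<noteq> 0" "det3 z x1 x3 \<noteq> 0" "det3 z x1 x4 \<noteq> 0"
    "det3 z x2 x3 \<noteq> 0" "det3 z x2 x4 \<noteq> 0" "det3 z x3 x4 \<noteq> 0"
    using nonzero by (simp_all add: line_of_cross_eq_iff)
  obtain P0 m where P0: "P0 \<in> line_of (cross z x1)" "P0 \<in> line_of (cross z x2)"
    and m: "is_line m" "P0 \<notin> m"
    and hs: "harmonic_set (meet m (line_of (cross z x1))) (meet m (line_of (cross z x2)))
      (meet m (line_of (cross z x3))) (meet m (line_of (cross z x4)))"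
    using H unfolding harmonic_pencil_def by blast
  have z: "z \<noteq> (0, 0, 0)" using cross_nonzero_imp_nonzero[OF nonzero(1)] by blast
  have cross12: "cross (cross z x1) (cross z x2) = vsmult (det3 z x1 x2) z"
    by (simp add: cross_cross_cross det3_rotate[of z x1 z])
  with dets(1) z have "P0 = pt (vsmult (det3 z x1 x2) z)"
    using common_point_line_of[OF _ P0] by (simp add: vsmult_eq_zero_iff)
  with dets(1) have P0z: "P0 = pt z" by simp
  obtain n where n: "n \<noteq> (0, 0, 0)" "m = line_of n" using m(1) unfolding is_line_def by blast
  have "vdot n z \<noteq> 0"
    using m(2) n P0z z by (simp add: mem_line_of_pt vdot_commute[of z])
  then have "det3 z x1 x3 * det3 z x2 x4 / (det3 z x1 x4 * det3 z x2 x3) = -1"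
    using hs nonzero dets(1) by (simp add: n(2) meet_section harmonic_set_def cross_ratio_section)
  with dets(3,4) have "det3 z x1 x3 * det3 z x2 x4 = - (det3 z x1 x4 * det3 z x2 x3)"
    by (simp add: divide_eq_eq)
  with dets show ?thesis by (simp add: harmonic_pencil_det_def)
qed

lemma harmonic_pencil_if_det:
  assumes "harmonic_pencil_det z x1 x2 x3 x4"
  shows "harmonic_pencil (line_of (cross z x1)) (line_of (cross z x2))
    (line_of (cross z x3)) (line_of (cross z x4))"
proof -
  have dets: "det3 z x1 x2 \<noteq> 0" "det3 z x1 x3 \<noteq> 0" "det3 z x1 x4 \<noteq> 0"
      "det3 z x2 x3 \<noteq> 0" "det3 z x2 x4 \<noteq> 0" "det3 z x3 x4 \<noteq> 0"
    and harmonic: "det3 z x1 x3 * det3 z x2 x4 = - (det3 z x1 x4 * det3 z x2 x3)"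
    using assms by (auto simp: harmonic_pencil_det_def eq_neg_iff_add_eq_0)
  have z: "z \<noteq> (0, 0, 0)" using det3_nonzero_imp_nonzero(1)[OF dets(1)] .
  have nonzero: "cross z x1 \<noteq> (0, 0, 0)" "cross z x2 \<noteq> (0, 0, 0)"
      "cross z x3 \<noteq> (0, 0, 0)" "cross z x4 \<noteq> (0, 0, 0)"
    using dets det3_nonzero_imp_nonzero(4) det3_swap det3_rotate by metis+
  obtain n where n: "n \<noteq> (0, 0, 0)" "vdot n z \<noteq> 0" using exists_vdot_nonzero z by blast
  let ?S = "\<lambda>x. pt (cross n (cross z x))"
  have on_n: "?S x \<in> line_of n" if "cross z x \<noteq> (0, 0, 0)" for x
    using section_nonzero[OF n(2) that] by (simp add: mem_line_of_pt vdot_commute[of _ n])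
  have "distinct [?S x1, ?S x2, ?S x3, ?S x4]"
    using dets n(2) det3_nonzero_imp_pt_neq[of z] by (simp add: det3_section)
  moreover have "collinear {?S x1, ?S x2, ?S x3, ?S x4}"
    unfolding collinear_def using n(1) nonzero on_n
    by (intro exI[of _ "line_of n"]) (simp add: is_line_line_of)
  moreover have "cross_ratio (?S x1) (?S x2) (?S x3) (?S x4) = -1"
    using dets harmonic n(2) nonzero by (simp add: cross_ratio_section)
  ultimately have "harmonic_set (?S x1) (?S x2) (?S x3) (?S x4)"
    by (simp add: harmonic_set_def)
  moreover have "pt z \<in> line_of (cross z x)" for x by (simp add: mem_line_of_pt z)
  moreover have "pt z \<notin> line_of n" using n(2) z by (simp add: mem_line_of_pt vdot_commute[of z])
  moreover have "distinct [line_of (cross z x1), line_of (cross z x2), line_of (cross z x3),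
      line_of (cross z x4)]"
    using dets nonzero by (simp add: line_of_cross_eq_iff)
  ultimately show ?thesis
    unfolding harmonic_pencil_def using n(1) nonzero
    by (intro conjI exI[of _ "pt z"] exI[of _ "line_of n"])
      (simp_all add: is_line_line_of meet_section[OF n(2)])
qed

lemma harmonic_pencil_iff_det:
  assumes "cross z x1 \<noteq> (0, 0, 0)" "cross z x2 \<noteq> (0, 0, 0)"
    "cross z x3 \<noteq> (0, 0, 0)" "cross z x4 \<noteq> (0, 0, 0)"
  shows "harmonic_pencil (join (pt z) (pt x1)) (join (pt z) (pt x2)) (join (pt z) (pt x3))
      (join (pt z) (pt x4)) \<longleftrightarrow> harmonic_pencil_det z x1 x2 x3 x4"
  unfolding join_pt[OF assms(1)] join_pt[OF assms(2)] join_pt[OF assms(3)] join_pt[OF assms(4)]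
  using harmonic_pencil_imp_det[OF assms] harmonic_pencil_if_det by blast

section \<open>Projective frames\<close>

definition coord_vec :: "'a::field vec3 \<Rightarrow> 'a vec3 \<Rightarrow> 'a vec3 \<Rightarrow> 'a vec3 \<Rightarrow> 'a vec3" where
  "coord_vec a b c q = (case q of (q1, q2, q3) \<Rightarrow> vadd (vadd (vsmult q1 a) (vsmult q2 b)) (vsmult q3 c))"

lemma coord_vec_Pair: "coord_vec a b c (q1, q2, q3) = vadd (vadd (vsmult q1 a) (vsmult q2 b)) (vsmult q3 c)"
  by (simp add: coord_vec_def)

lemma coord_vec_basis:
  "coord_vec a b c (1, 0, 0) = a" "coord_vec a b c (0, 1, 0) = b" "coord_vec a b c (0, 0, 1) = c"
  "coord_vec a b c (0, 0, 0) = (0, 0, 0)"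
  by (simp_all add: coord_vec_Pair)

lemma det3_coord_vec:
  "det3 (coord_vec a b c p) (coord_vec a b c q) (coord_vec a b c r) = det3 p q r * det3 a b c"
  by (cases a; cases b; cases c; cases p; cases q; cases r) (simp add: coord_vec_Pair algebra_simps)

lemma coord_vec_vsmult: "coord_vec a b c (vsmult k p) = vsmult k (coord_vec a b c p)"
  by (cases a; cases b; cases c; cases p) (simp add: coord_vec_Pair algebra_simps)

lemma coord_vec_vadd: "coord_vec a b c (vadd p q) = vadd (coord_vec a b c p) (coord_vec a b c q)"
  by (cases a; cases b; cases c; cases p; cases q) (simp add: coord_vec_Pair algebra_simps)

locale projective_frame =
  fixes a b c :: "'a::field vec3"
  assumes basis: "det3 a b c \<noteq> 0"
begin

abbreviation V :: "'a vec3 \<Rightarrow> 'a vec3" where "V \<equiv> coord_vec a b c"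
abbreviation Pt :: "'a vec3 \<Rightarrow> 'a point" where "Pt q \<equiv> pt (V q)"

lemma coord_vec_inj: "V p = V q \<Longrightarrow> p = q"
proof -
  assume eq: "V p = V q"
  have "det3 (V p) (V (0, 1, 0)) (V (0, 0, 1)) = det3 (V q) (V (0, 1, 0)) (V (0, 0, 1))"
    "det3 (V (1, 0, 0)) (V p) (V (0, 0, 1)) = det3 (V (1, 0, 0)) (V q) (V (0, 0, 1))"
    "det3 (V (1, 0, 0)) (V (0, 1, 0)) (V p) = det3 (V (1, 0, 0)) (V (0, 1, 0)) (V q)"
    unfolding eq by simp_all
  with basis show "p = q" unfolding det3_coord_vec by (cases p; cases q) simp
qed

lemma coord_vec_nonzero: "p \<noteq> (0, 0, 0) \<Longrightarrow> V p \<noteq> (0, 0, 0)"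
  using coord_vec_inj[of p "(0, 0, 0)"] by (auto simp: coord_vec_basis)

lemma coord_vec_surj: "\<exists>q. V q = v"
proof
  let ?K = "det3 a b c"
  have "V (vsmult (1 / ?K) (det3 v b c, det3 a v c, det3 a b v)) =
      vsmult (1 / ?K) (V (det3 v b c, det3 a v c, det3 a b v))"
    by (rule coord_vec_vsmult)
  also have "\<dots> = vsmult (1 / ?K) (vsmult ?K v)"
    by (simp only: coord_vec_Pair cramer_rule[of a b c v])
  also have "\<dots> = v"
    using basis by (simp add: vsmult_vsmult)
  finally show "V (vsmult (1 / ?K) (det3 v b c, det3 a v c, det3 a b v)) = v" .
qed

lemma Pt_surj: "\<exists>q. q \<noteq> (0, 0, 0) \<and> X = Pt q"
proof -
  obtain q where q: "V q = rep X" using coord_vec_surj by blast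
  then have "q \<noteq> (0, 0, 0)" using rep_nonzero[of X] by (auto simp: coord_vec_basis)
  moreover have "X = Pt q" by (simp add: q)
  ultimately show ?thesis by blast
qed

lemma Pt_eq_Pt_iff:
  assumes "p \<noteq> (0, 0, 0)" "q \<noteq> (0, 0, 0)"
  shows "Pt p = Pt q \<longleftrightarrow> (\<exists>k. q = vsmult k p)"
  using pt_eq_pt_iff[OF coord_vec_nonzero[OF assms(1)] coord_vec_nonzero[OF assms(2)]]
    coord_vec_inj by (metis coord_vec_vsmult)

lemma det3_nonzero_imp_Pt_neq: "det3 e p q \<noteq> 0 \<Longrightarrow> Pt p \<noteq> Pt q"
  using det3_nonzero_imp_pt_neq[of "V e" "V p" "V q"] basis by (simp add: det3_coord_vec)

lemma cross_coord_vec_nonzero: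
  assumes "cross p q \<noteq> (0, 0, 0)"
  shows "cross (V p) (V q) \<noteq> (0, 0, 0)"
proof -
  obtain n where "vdot n (cross p q) \<noteq> 0" using exists_vdot_nonzero assms by blast
  then have "det3 n p q \<noteq> 0" by (simp add: det3_def)
  then have "det3 (V n) (V p) (V q) \<noteq> 0" using basis by (simp add: det3_coord_vec)
  then show ?thesis using det3_nonzero_imp_nonzero(4) by blast
qed

lemma join_Pt: "cross p q \<noteq> (0, 0, 0) \<Longrightarrow> join (Pt p) (Pt q) = line_of (cross (V p) (V q))"
  using join_pt cross_coord_vec_nonzero by blast

lemma mem_join_Pt:
  assumes "r \<noteq> (0, 0, 0)" "cross p q \<noteq> (0, 0, 0)"
  shows "Pt r \<in> join (Pt p) (Pt q) \<longleftrightarrow> det3 r p q = 0"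
  using basis coord_vec_nonzero[OF assms(1)]
  by (simp add: join_Pt[OF assms(2)] mem_line_of_pt det3_def[symmetric] det3_coord_vec)

lemma meet_join_Pt:
  assumes "cross p q \<noteq> (0, 0, 0)" "cross r s \<noteq> (0, 0, 0)"
    "cross (cross p q) (cross r s) \<noteq> (0, 0, 0)"
  shows "meet (join (Pt p) (Pt q)) (join (Pt r) (Pt s)) = Pt (cross (cross p q) (cross r s))"
proof -
  let ?K = "det3 a b c"
  have "cross (cross (V p) (V q)) (cross (V r) (V s)) =
      vadd (vsmult (?K * det3 p q s) (V r)) (vsmult (?K * - det3 p q r) (V s))"
    by (simp add: cross_cross_cross det3_coord_vec mult.commute)
  also have "\<dots> = vsmult ?K (V (vadd (vsmult (det3 p q s) r) (vsmult (- det3 p q r) s)))"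
    by (simp only: coord_vec_vadd coord_vec_vsmult vsmult_vadd vsmult_vsmult)
  finally have eq: "cross (cross (V p) (V q)) (cross (V r) (V s)) =
      vsmult ?K (V (cross (cross p q) (cross r s)))"
    by (simp only: cross_cross_cross)
  with basis coord_vec_nonzero[OF assms(3)]
  have nonzero: "cross (cross (V p) (V q)) (cross (V r) (V s)) \<noteq> (0, 0, 0)"
    by (simp add: vsmult_eq_zero_iff)
  have "meet (join (Pt p) (Pt q)) (join (Pt r) (Pt s)) =
      meet (line_of (cross (V p) (V q))) (line_of (cross (V r) (V s)))"
    by (simp only: join_Pt[OF assms(1)] join_Pt[OF assms(2)])
  also have "\<dots> = pt (cross (cross (V p) (V q)) (cross (V r) (V s)))"
    using nonzero by (rule meet_line_of)
  also have "\<dots> = Pt (cross (cross p q) (cross r s))"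
    unfolding eq using basis by (rule pt_vsmult)
  finally show ?thesis .
qed

lemma collinear_Pt_iff:
  assumes "p \<noteq> (0, 0, 0)" "q \<noteq> (0, 0, 0)" "r \<noteq> (0, 0, 0)" "Pt q \<noteq> Pt r"
  shows "collinear {Pt p, Pt q, Pt r} \<longleftrightarrow> det3 p q r = 0"
  using collinear_pt_iff[OF coord_vec_nonzero[OF assms(1)] coord_vec_nonzero[OF assms(2)]
      coord_vec_nonzero[OF assms(3)] assms(4)] basis
  by (simp add: det3_coord_vec)

lemma cross_ratio_Pt:
  assumes "det3 e p1 p2 \<noteq> 0" "det3 p3 p1 p2 = 0" "det3 p4 p1 p2 = 0"
    "p3 \<noteq> (0, 0, 0)" "p4 \<noteq> (0, 0, 0)"
  shows "cross_ratio (Pt p1) (Pt p2) (Pt p3) (Pt p4) =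
    det3 e p1 p3 * det3 e p2 p4 / (det3 e p1 p4 * det3 e p2 p3)"
  using cross_ratio_pt[of "V e" "V p1" "V p2" "V p3" "V p4"] assms basis coord_vec_nonzero
  by (simp add: det3_coord_vec)

lemma harmonic_pencil_Pt_iff:
  assumes "cross z x1 \<noteq> (0, 0, 0)" "cross z x2 \<noteq> (0, 0, 0)"
    "cross z x3 \<noteq> (0, 0, 0)" "cross z x4 \<noteq> (0, 0, 0)"
  shows "harmonic_pencil (join (Pt z) (Pt x1)) (join (Pt z) (Pt x2)) (join (Pt z) (Pt x3))
      (join (Pt z) (Pt x4)) \<longleftrightarrow> harmonic_pencil_det z x1 x2 x3 x4"
proof -
  have "det3 (V z) (V x1) (V x3) * det3 (V z) (V x2) (V x4) +
      det3 (V z) (V x1) (V x4) * det3 (V z) (V x2) (V x3) =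
    (det3 a b c)\<^sup>2 * (det3 z x1 x3 * det3 z x2 x4 + det3 z x1 x4 * det3 z x2 x3)"
    by (simp add: det3_coord_vec algebra_simps power2_eq_square)
  then have "harmonic_pencil_det (V z) (V x1) (V x2) (V x3) (V x4) \<longleftrightarrow>
      harmonic_pencil_det z x1 x2 x3 x4"
    using basis by (simp add: harmonic_pencil_det_def det3_coord_vec)
  then show ?thesis
    using harmonic_pencil_iff_det[OF cross_coord_vec_nonzero[OF assms(1)]
        cross_coord_vec_nonzero[OF assms(2)] cross_coord_vec_nonzero[OF assms(3)]
        cross_coord_vec_nonzero[OF assms(4)]]
    by simp
qed

end

section \<open>The harmonic conic of the standard quadrangle\<close>

definition harmonic_conic :: "'a::field vec3 \<Rightarrow> 'a" where
  "harmonic_conic q = (case q of (u, v, w) \<Rightarrow> u * w + v * w - 2 * u * v)"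

definition conic_param :: "'a::field \<Rightarrow> 'a \<Rightarrow> 'a vec3" where
  "conic_param s t = (s * (s + t), t * (s + t), 2 * s * t)"

lemma harmonic_conic_param: "harmonic_conic (conic_param s t) = 0"
  by (simp add: harmonic_conic_def conic_param_def algebra_simps)

lemma conic_param_nonzero:
  fixes s t :: "'a::field"
  assumes "2 \<noteq> (0::'a)" "s \<noteq> 0 \<or> t \<noteq> 0"
  shows "conic_param s t \<noteq> (0, 0, 0)"
  using assms by (auto simp: conic_param_def add_eq_0_iff)

lemma conic_param_eq_imp_proportional:
  fixes s t s' t' k :: "'a::field"
  assumes "s \<noteq> 0 \<or> t \<noteq> 0" "s' \<noteq> 0 \<or> t' \<noteq> 0" "k \<noteq> 0"
    and eq: "conic_param s' t' = vsmult k (conic_param s t)"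
  shows "\<exists>e. (s', t', 0) = vsmult e (s, t, 0)"
proof -
  have E: "s' * (s' + t') = k * (s * (s + t))" "t' * (s' + t') = k * (t * (s + t))"
    using eq by (simp_all add: conic_param_def)
  show ?thesis
  proof (cases "s + t = 0")
    case True
    with E assms(2) have "s' + t' = 0" by auto
    with True assms(1) show ?thesis
      by (intro exI[of _ "s' / s"]) (auto simp: field_simps add_eq_0_iff)
  next
    case False
    with E assms(1,3) have "s' + t' \<noteq> 0" by auto
    with E False show ?thesis
      by (intro exI[of _ "k * (s + t) / (s' + t')"]) (simp add: field_simps)
  qed
qed

lemma harmonic_conic_zero_imp_param:
  fixes u v w :: "'a::field"
  assumes "harmonic_conic (u, v, w) = 0" "(u, v, w) \<noteq> (0, 0, 0)"
  shows "\<exists>s t k. (s \<noteq> 0 \<or> t \<noteq> 0) \<and> conic_param s t = vsmult k (u, v, w)"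
proof (cases "u = 0 \<and> v = 0")
  case True
  with assms(2) have "w \<noteq> 0" by auto
  with True show ?thesis
    by (intro exI[of _ 1] exI[of _ "-1"] exI[of _ "-2 / w"]) (simp add: conic_param_def)
next
  case False
  from assms(1) have "2 * u * v = (u + v) * w" by (simp add: harmonic_conic_def algebra_simps)
  with False show ?thesis
    by (intro exI[of _ u] exI[of _ v] exI[of _ "u + v"]) (simp add: conic_param_def algebra_simps)
qed

lemma harmonic_conic_off_vertices:
  fixes u v w :: "'a::field"
  assumes "2 \<noteq> (0::'a)" "harmonic_conic (u, v, w) = 0"
    and "v \<noteq> 0 \<or> w \<noteq> 0" "u \<noteq> 0 \<or> w \<noteq> 0" "u \<noteq> 0 \<or> v \<noteq> 0" "\<not> (u = v \<and> v = w)"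
  shows "u \<noteq> 0 \<and> v \<noteq> 0 \<and> w \<noteq> 0 \<and> u \<noteq> v \<and> v \<noteq> w \<and> u \<noteq> w"
proof -
  have conic: "u * w + v * w = 2 * u * v" using assms(2) by (simp add: harmonic_conic_def)
  have "u \<noteq> 0" "v \<noteq> 0" "w \<noteq> 0" using conic assms(1,3-5) by auto
  moreover have "u \<noteq> v"
  proof
    assume "u = v"
    with conic have "2 * u * (w - u) = 0" by (simp add: algebra_simps)
    with assms(1,6) \<open>u = v\<close> \<open>u \<noteq> 0\<close> show False by simp
  qed
  moreover have "v \<noteq> w"
  proof
    assume "v = w"
    with conic have "w * (w - u) = 0" by (simp add: algebra_simps)
    with assms(6) \<open>v = w\<close> \<open>w \<noteq> 0\<close> show False by simp
  qed
  moreover have "u \<noteq> w"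
  proof
    assume "u = w"
    with conic have "u * (u - v) = 0" by (simp add: algebra_simps)
    with assms(6) \<open>u = w\<close> \<open>u \<noteq> 0\<close> show False by simp
  qed
  ultimately show ?thesis by blast
qed

lemma harmonic_pencil_det_vertices:
  "harmonic_pencil_det (u, v, w) (1, 0, 0) (0, 1, 0) (0, 0, 1) (1, 1, 1) \<longleftrightarrow>
    u \<noteq> 0 \<and> v \<noteq> 0 \<and> w \<noteq> 0 \<and> u \<noteq> v \<and> v \<noteq> w \<and> u \<noteq> w \<and> harmonic_conic (u, v, w) = 0"
  by (auto simp: harmonic_pencil_det_def harmonic_conic_def algebra_simps)

context projective_frame
begin

lemma Pt_eq_if_proportional:
  assumes "q = vsmult k p" "q \<noteq> (0, 0, 0)"
  shows "Pt q = Pt p"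
proof -
  from assms have "k \<noteq> 0" by auto
  with assms(1) show ?thesis by (simp add: coord_vec_vsmult)
qed

end

locale harmonic_frame = projective_frame +
  assumes two_nonzero: "(2::'a) \<noteq> 0"
begin

abbreviation "PA \<equiv> Pt (1, 0, 0)"
abbreviation "PB \<equiv> Pt (0, 1, 0)"
abbreviation "PC \<equiv> Pt (0, 0, 1)"
abbreviation "PD \<equiv> Pt (1, 1, 1)"

lemma mem_join_AB: "X \<in> join PA PB \<longleftrightarrow> (\<exists>s t. (s \<noteq> 0 \<or> t \<noteq> 0) \<and> X = Pt (s, t, 0))"
proof
  assume X: "X \<in> join PA PB"
  obtain q1 q2 q3 where q: "(q1, q2, q3) \<noteq> (0, 0, 0)" "X = Pt (q1, q2, q3)"
    using Pt_surj by (metis prod_cases3)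
  with X have "q3 = 0" by (simp add: mem_join_Pt)
  with q show "\<exists>s t. (s \<noteq> 0 \<or> t \<noteq> 0) \<and> X = Pt (s, t, 0)" by auto
qed (auto simp: mem_join_Pt)

lemma harmonic_conjugate_AB:
  assumes "s \<noteq> 0" "t \<noteq> 0"
  shows "harmonic_set PA PB (Pt (s, t, 0)) Y \<longleftrightarrow> Y = Pt (s, -t, 0)"
proof
  assume hs: "harmonic_set PA PB (Pt (s, t, 0)) Y"
  obtain q1 q2 q3 where q: "(q1, q2, q3) \<noteq> (0, 0, 0)" "Y = Pt (q1, q2, q3)"
    using Pt_surj by (metis prod_cases3)
  have "collinear {Y, PA, PB}"
    using hs unfolding harmonic_set_def collinear_def by blast
  with q have "q3 = 0"
    using collinear_Pt_iff[of "(q1, q2, q3)" "(1, 0, 0)" "(0, 1, 0)"]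
      det3_nonzero_imp_Pt_neq[of "(0, 0, 1)" "(1, 0, 0)" "(0, 1, 0)"] by simp
  moreover have "cross_ratio PA PB (Pt (s, t, 0)) Y = -1" using hs by (simp add: harmonic_set_def)
  ultimately have ratio: "t * - q1 / (q2 * - s) = -1"
    using q cross_ratio_Pt[of "(0, 0, 1)" "(1, 0, 0)" "(0, 1, 0)" "(s, t, 0)" "(q1, q2, q3)"] assms
    by simp
  then have "q2 \<noteq> 0" by auto
  with ratio assms have "q1 * t = - q2 * s" by (simp add: divide_eq_eq mult.commute)
  with assms \<open>q3 = 0\<close> have "(q1, q2, q3) = vsmult (- q2 / t) (s, - t, 0)" by (simp add: field_simps)
  moreover have "(s, -t, 0) \<noteq> (0, 0, 0)" using assms by simp
  ultimately have "Pt (s, -t, 0) = Pt (q1, q2, q3)" using Pt_eq_Pt_iff q(1) by blast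
  with q(2) show "Y = Pt (s, -t, 0)" by simp
next
  assume Y: "Y = Pt (s, -t, 0)"
  have "distinct [PA, PB, Pt (s, t, 0), Pt (s, -t, 0)]"
    using assms two_nonzero det3_nonzero_imp_Pt_neq[of "(0, 0, 1)"] by auto
  moreover have "is_line (join PA PB)"
    using cross_coord_vec_nonzero[of "(1, 0, 0)" "(0, 1, 0)"] by (simp add: join_Pt is_line_line_of)
  then have "collinear {PA, PB, Pt (s, t, 0), Pt (s, -t, 0)}"
    unfolding collinear_def using assms by (intro exI[of _ "join PA PB"]) (auto simp: mem_join_Pt)
  moreover have "cross_ratio PA PB (Pt (s, t, 0)) (Pt (s, -t, 0)) = -1"
    using assms cross_ratio_Pt[of "(0, 0, 1)" "(1, 0, 0)" "(0, 1, 0)" "(s, t, 0)" "(s, -t, 0)"]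
    by simp
  ultimately show "harmonic_set PA PB (Pt (s, t, 0)) Y" by (simp add: harmonic_set_def Y)
qed

lemma hrefl_AB:
  assumes "s \<noteq> 0 \<or> t \<noteq> 0"
  shows "hrefl PA PB (Pt (s, t, 0)) = Pt (s, -t, 0)"
proof (cases "s = 0 \<or> t = 0")
  case True
  with assms consider "s = 0" "t \<noteq> 0" | "t = 0" "s \<noteq> 0" by blast
  then show ?thesis
  proof cases
    case 1
    then have "Pt (s, t, 0) = PB" "Pt (s, -t, 0) = PB" by (auto intro: Pt_eq_if_proportional)
    then show ?thesis by (simp add: hrefl_def)
  next
    case 2
    then have "Pt (s, t, 0) = PA" "Pt (s, -t, 0) = PA" by (auto intro: Pt_eq_if_proportional)
    then show ?thesis by (simp add: hrefl_def)
  qed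
next
  case False
  then have "Pt (s, t, 0) \<noteq> PA" "Pt (s, t, 0) \<noteq> PB"
    using det3_nonzero_imp_Pt_neq[of "(0, 0, 1)"] by auto
  moreover have "(THE Y. harmonic_set PA PB (Pt (s, t, 0)) Y) = Pt (s, -t, 0)"
    using False harmonic_conjugate_AB by (intro the_equality) auto
  ultimately show ?thesis by (simp add: hrefl_def)
qed

lemma join_C_neq_join_D:
  assumes "s \<noteq> 0 \<or> t \<noteq> 0"
  shows "join PC (Pt (s, t, 0)) \<noteq> join PD (Pt (s, -t, 0))"
proof
  assume eq: "join PC (Pt (s, t, 0)) = join PD (Pt (s, -t, 0))"
  have cross: "cross (0, 0, 1) (s, t, 0) \<noteq> (0, 0, 0)" "cross (1, 1, 1) (s, - t, 0) \<noteq> (0, 0, 0)"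
    using assms by auto
  have nonzero: "(s, t, 0) \<noteq> (0, 0, 0)" using assms by simp
  have "PC \<in> join PD (Pt (s, -t, 0))" "Pt (s, t, 0) \<in> join PD (Pt (s, -t, 0))"
    unfolding eq[symmetric] using nonzero by (simp_all add: mem_join_Pt[OF _ cross(1)])
  then have C: "det3 (0, 0, 1) (1, 1, 1) (s, - t, 0) = 0"
    and X: "det3 (s, t, 0) (1, 1, 1) (s, - t, 0) = 0"
    using mem_join_Pt[OF _ cross(2), of "(0, 0, 1)"] mem_join_Pt[OF nonzero cross(2)] by simp_all
  from C have "t = - s" by (auto simp: algebra_simps)
  moreover from X have "2 * s * t = 0" by (simp add: algebra_simps)
  ultimately show False using assms two_nonzero by auto
qed

lemma meet_join_C_join_D:
  assumes "s \<noteq> 0 \<or> t \<noteq> 0"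
  shows "meet (join PC (Pt (s, t, 0))) (join PD (Pt (s, -t, 0))) = Pt (conic_param s t)"
proof -
  have cross: "cross (cross (0, 0, 1) (s, t, 0)) (cross (1, 1, 1) (s, - t, 0)) =
      vsmult (-1) (conic_param s t)"
    by (simp add: conic_param_def algebra_simps)
  moreover have "conic_param s t \<noteq> (0, 0, 0)"
    using conic_param_nonzero two_nonzero assms by blast
  ultimately have "cross (cross (0, 0, 1) (s, t, 0)) (cross (1, 1, 1) (s, - t, 0)) \<noteq> (0, 0, 0)"
    by (simp add: vsmult_eq_zero_iff)
  moreover have "cross (0, 0, 1) (s, t, 0) \<noteq> (0, 0, 0)" "cross (1, 1, 1) (s, - t, 0) \<noteq> (0, 0, 0)"
    using assms by auto
  ultimately have "meet (join PC (Pt (s, t, 0))) (join PD (Pt (s, -t, 0))) =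
      Pt (cross (cross (0, 0, 1) (s, t, 0)) (cross (1, 1, 1) (s, - t, 0)))"
    by (intro meet_join_Pt)
  also have "\<dots> = Pt (conic_param s t)"
    using cross \<open>cross (cross (0, 0, 1) (s, t, 0)) (cross (1, 1, 1) (s, - t, 0)) \<noteq> (0, 0, 0)\<close>
    by (rule Pt_eq_if_proportional)
  finally show ?thesis .
qed

lemma mem_harmonic_curve_iff:
  assumes "p \<noteq> (0, 0, 0)"
  shows "Pt p \<in> harmonic_curve PA PC PB PD \<longleftrightarrow> harmonic_conic p = 0"
proof -
  obtain u v w where p: "p = (u, v, w)" by (cases p)
  with assms have q: "(u, v, w) \<noteq> (0, 0, 0)" by simp
  have "Pt (u, v, w) = PA \<longleftrightarrow> v = 0 \<and> w = 0" "Pt (u, v, w) = PB \<longleftrightarrow> u = 0 \<and> w = 0"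
    "Pt (u, v, w) = PC \<longleftrightarrow> u = 0 \<and> v = 0" "Pt (u, v, w) = PD \<longleftrightarrow> u = v \<and> v = w"
    using q by (auto simp: Pt_eq_Pt_iff eq_commute[of "Pt (u, v, w)"])
  then have vertex: "Pt (u, v, w) \<in> {PA, PB, PC, PD} \<longleftrightarrow>
      (v = 0 \<and> w = 0) \<or> (u = 0 \<and> w = 0) \<or> (u = 0 \<and> v = 0) \<or> (u = v \<and> v = w)"
    by auto
  have "Pt (u, v, w) \<in> harmonic_curve PA PC PB PD \<longleftrightarrow> harmonic_conic (u, v, w) = 0"
  proof (cases "Pt (u, v, w) \<in> {PA, PB, PC, PD}")
    case True
    then have "Pt (u, v, w) \<in> harmonic_curve PA PC PB PD" by (auto simp: harmonic_curve_def)
    moreover from True have "harmonic_conic (u, v, w) = 0"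
      unfolding vertex by (auto simp: harmonic_conic_def)
    ultimately show ?thesis by simp
  next
    case False
    then have "cross (u, v, w) (1, 0, 0) \<noteq> (0, 0, 0)" "cross (u, v, w) (0, 1, 0) \<noteq> (0, 0, 0)"
      "cross (u, v, w) (0, 0, 1) \<noteq> (0, 0, 0)" "cross (u, v, w) (1, 1, 1) \<noteq> (0, 0, 0)"
      using False unfolding vertex by auto
    then have "Pt (u, v, w) \<in> harmonic_curve PA PC PB PD \<longleftrightarrow>
        harmonic_pencil_det (u, v, w) (1, 0, 0) (0, 1, 0) (0, 0, 1) (1, 1, 1)"
      using False by (simp add: harmonic_curve_def harmonic_pencil_Pt_iff)
    also have "\<dots> \<longleftrightarrow> harmonic_conic (u, v, w) = 0"
      using False harmonic_conic_off_vertices[OF two_nonzero] unfolding vertex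
      by (auto simp: harmonic_pencil_det_vertices)
    finally show ?thesis .
  qed
  then show ?thesis by (simp add: p)
qed

abbreviation harmonic_map :: "'a point \<Rightarrow> 'a point" where
  "harmonic_map X \<equiv> meet (join PC X) (join PD (hrefl PA PB X))"

lemma harmonic_map_Pt:
  "s \<noteq> 0 \<or> t \<noteq> 0 \<Longrightarrow> harmonic_map (Pt (s, t, 0)) = Pt (conic_param s t)"
  by (simp add: hrefl_AB meet_join_C_join_D)

lemma inj_on_harmonic_map: "inj_on harmonic_map (join PA PB)"
proof (rule inj_onI)
  fix X Y assume "X \<in> join PA PB" "Y \<in> join PA PB" and eq: "harmonic_map X = harmonic_map Y"
  then obtain s t s' t' where st: "s \<noteq> 0 \<or> t \<noteq> 0" "X = Pt (s, t, 0)"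
    and st': "s' \<noteq> 0 \<or> t' \<noteq> 0" "Y = Pt (s', t', 0)"
    by (auto simp: mem_join_AB)
  have nonzero: "conic_param s t \<noteq> (0, 0, 0)" "conic_param s' t' \<noteq> (0, 0, 0)"
    using conic_param_nonzero two_nonzero st st' by blast+
  from eq st st' have "Pt (conic_param s t) = Pt (conic_param s' t')" by (simp add: harmonic_map_Pt)
  then obtain k where k: "conic_param s' t' = vsmult k (conic_param s t)"
    using Pt_eq_Pt_iff nonzero by blast
  with nonzero have "k \<noteq> 0" by auto
  with k st st' obtain e where "(s', t', 0) = vsmult e (s, t, 0)"
    using conic_param_eq_imp_proportional by blast
  with st'(1) have "Pt (s', t', 0) = Pt (s, t, 0)" by (intro Pt_eq_if_proportional) auto
  with st st' show "X = Y" by simp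
qed

lemma harmonic_map_image: "harmonic_map ` join PA PB = harmonic_curve PA PC PB PD"
proof (intro set_eqI iffI)
  fix Z assume "Z \<in> harmonic_map ` join PA PB"
  then obtain X where X: "X \<in> join PA PB" "Z = harmonic_map X" by blast
  from X(1) have "\<exists>s t. (s \<noteq> 0 \<or> t \<noteq> 0) \<and> X = Pt (s, t, 0)" by (simp only: mem_join_AB)
  with X(2) obtain s t where st: "s \<noteq> 0 \<or> t \<noteq> 0" "Z = harmonic_map (Pt (s, t, 0))" by blast
  then have "Z = Pt (conic_param s t)" by (simp add: harmonic_map_Pt)
  with st(1) show "Z \<in> harmonic_curve PA PC PB PD"
    by (simp add: mem_harmonic_curve_iff conic_param_nonzero[OF two_nonzero] harmonic_conic_param)
next
  fix Z assume Z: "Z \<in> harmonic_curve PA PC PB PD"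
  obtain q where "q \<noteq> (0, 0, 0)" "Z = Pt q" using Pt_surj by blast
  moreover obtain u v w where "q = (u, v, w)" by (cases q)
  ultimately have q: "(u, v, w) \<noteq> (0, 0, 0)" "Z = Pt (u, v, w)" by auto
  with Z have "harmonic_conic (u, v, w) = 0" by (simp add: mem_harmonic_curve_iff)
  then obtain s t k where st: "s \<noteq> 0 \<or> t \<noteq> 0" "conic_param s t = vsmult k (u, v, w)"
    using harmonic_conic_zero_imp_param q(1) by blast
  have "Pt (conic_param s t) = Pt (u, v, w)"
    using st(2) conic_param_nonzero[OF two_nonzero st(1)] by (rule Pt_eq_if_proportional)
  with st(1) q(2) have "Z = harmonic_map (Pt (s, t, 0))" by (simp add: harmonic_map_Pt)
  moreover have "Pt (s, t, 0) \<in> join PA PB" using st(1) by (auto simp: mem_join_AB)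
  ultimately show "Z \<in> harmonic_map ` join PA PB" by blast
qed

theorem harmonic_map_bij:
  "(\<forall>X \<in> join PA PB. join PC X \<noteq> join PD (hrefl PA PB X)) \<and>
    bij_betw harmonic_map (join PA PB) (harmonic_curve PA PC PB PD)"
  using join_C_neq_join_D inj_on_harmonic_map harmonic_map_image
  by (auto simp: mem_join_AB hrefl_AB bij_betw_def)

end

lemma quadrangle_det3_nonzero:
  assumes "quadrangle A C B D"
  shows "det3 (rep A) (rep B) (rep C) \<noteq> 0" "det3 (rep A) (rep C) (rep D) \<noteq> 0"
    "det3 (rep A) (rep B) (rep D) \<noteq> 0" "det3 (rep C) (rep B) (rep D) \<noteq> 0"
proof -
  have noncollinear: "det3 (rep P) (rep Q) (rep R) \<noteq> 0"
    if "\<not> collinear {P, Q, R}" "Q \<noteq> R" for P Q R :: "'a point"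
    using that collinear_pt_iff[of "rep P" "rep Q" "rep R"] by (simp add: rep_nonzero)
  from assms have "det3 (rep A) (rep C) (rep B) \<noteq> 0"
    by (intro noncollinear) (auto simp: quadrangle_def)
  then show "det3 (rep A) (rep B) (rep C) \<noteq> 0" by (simp add: det3_swap[of _ "rep C"])
  from assms show "det3 (rep A) (rep C) (rep D) \<noteq> 0" "det3 (rep A) (rep B) (rep D) \<noteq> 0"
    "det3 (rep C) (rep B) (rep D) \<noteq> 0"
    by (intro noncollinear; auto simp: quadrangle_def)+
qed

lemma quadrangle_frame:
  assumes "quadrangle A C B D"
  obtains a b c where "det3 a b c \<noteq> 0" "A = pt a" "B = pt b" "C = pt c"
    "D = pt (coord_vec a b c (1, 1, 1))"
proof -
  note dets = quadrangle_det3_nonzero[OF assms]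
  interpret projective_frame "rep A" "rep B" "rep C" by unfold_locales (fact dets(1))
  obtain \<alpha> \<beta> \<gamma> where q: "V (\<alpha>, \<beta>, \<gamma>) = rep D" by (metis coord_vec_surj prod_cases3)
  have "det3 (rep C) (rep B) (rep D) = - \<alpha> * det3 (rep A) (rep B) (rep C)"
    "det3 (rep A) (rep C) (rep D) = - \<beta> * det3 (rep A) (rep B) (rep C)"
    "det3 (rep A) (rep B) (rep D) = \<gamma> * det3 (rep A) (rep B) (rep C)"
    using det3_coord_vec[of "rep A" "rep B" "rep C" "(0, 0, 1)" "(0, 1, 0)" "(\<alpha>, \<beta>, \<gamma>)"]
      det3_coord_vec[of "rep A" "rep B" "rep C" "(1, 0, 0)" "(0, 0, 1)" "(\<alpha>, \<beta>, \<gamma>)"]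
      det3_coord_vec[of "rep A" "rep B" "rep C" "(1, 0, 0)" "(0, 1, 0)" "(\<alpha>, \<beta>, \<gamma>)"]
    by (simp_all add: q coord_vec_basis)
  with dets have nonzero: "\<alpha> \<noteq> 0" "\<beta> \<noteq> 0" "\<gamma> \<noteq> 0" by auto
  show ?thesis
  proof (rule that)
    show "det3 (vsmult \<alpha> (rep A)) (vsmult \<beta> (rep B)) (vsmult \<gamma> (rep C)) \<noteq> 0"
      using nonzero dets(1) by (simp add: det3_vsmult)
    show "A = pt (vsmult \<alpha> (rep A))" "B = pt (vsmult \<beta> (rep B))" "C = pt (vsmult \<gamma> (rep C))"
      using nonzero by simp_all
    show "D = pt (coord_vec (vsmult \<alpha> (rep A)) (vsmult \<beta> (rep B)) (vsmult \<gamma> (rep C)) (1, 1, 1))"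
      using q by (simp add: coord_vec_Pair)
  qed
qed

theorem mainTheorem2:
  fixes A C B D :: "'a::field point"
  assumes char: "(2::'a) \<noteq> 0"
    and Q: "quadrangle A C B D"
  shows "(\<forall>X \<in> join A B. join C X \<noteq> join D (hrefl A B X)) \<and>
         bij_betw (\<lambda>X. meet (join C X) (join D (hrefl A B X))) (join A B)
           (harmonic_curve A C B D)"
proof -
  obtain a b c where frame: "det3 a b c \<noteq> 0"
    and vertices: "A = pt a" "B = pt b" "C = pt c" "D = pt (coord_vec a b c (1, 1, 1))"
    using quadrangle_frame[OF Q] by blast
  interpret harmonic_frame a b c
    using frame char by unfold_locales
  show ?thesis
    using harmonic_map_bij unfolding vertices by (simp add: coord_vec_basis)
qed

end
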